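(* There exist universal constants $0<c\le C<\infty$ such that for every $1<r\le\infty$ and $n\in\mathbb{N}$, every $f:\{-1,1\}^n\to\mathbb{R}$ satisfies $$c\,Q(f)\le \inf_{g\in \mathscr{P}^n_{>1}} \|f-g\|_{r}\le C\,Q(f),\qquad Q(f)= |\mathbb{E}f|+ \max_{i\in\{1,\ldots,n\}} \big| \widehat{f}(\{i\})\big| + \sqrt{\frac{r-1}{r}} \Big(\sum_{i=1}^n \widehat{f}(\{i\})^2\Big)^{1/2}$$ (with $\frac{r-1}{r}=1$ when $r=\infty$).
   Context: Every $f:\{-1,1\}^n\to\mathbb{R}$ has a unique Fourier–Walsh expansion $f=\sum_{S\subseteq\{1,\dots,n\}}\widehat f(S)w_S$, where $w_S(x)=\prod_{i\in S}x_i$. $\mathscr{P}^n_{>1}=\{f:\{-1,1\}^n\to\mathbb{R}:\ \widehat f(S)=0 \text{ whenever } |S|\le 1\}$. $\|\cdot\|_r$ is the $L_r$ norm and $\mathbb{E}$ the expectation with respect to the uniform probability measure on $\{-1,1\}^n$. *)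

theory Defs
  imports "HOL-Analysis.Analysis"
begin

definition cube :: "nat \<Rightarrow> (nat \<Rightarrow> real) set" where
  "cube n = PiE {1..n} (\<lambda>_. {-1, 1})"

definition expect :: "nat \<Rightarrow> ((nat \<Rightarrow> real) \<Rightarrow> real) \<Rightarrow> real" where
  "expect n h = (\<Sum>x\<in>cube n. h x) / 2 ^ n"

definition walsh :: "nat set \<Rightarrow> (nat \<Rightarrow> real) \<Rightarrow> real" where
  "walsh S x = (\<Prod>i\<in>S. x i)"

definition fourier :: "nat \<Rightarrow> ((nat \<Rightarrow> real) \<Rightarrow> real) \<Rightarrow> nat set \<Rightarrow> real" where
  "fourier n f S = expect n (\<lambda>x. f x * walsh S x)"

definition P_gt1 :: "nat \<Rightarrow> ((nat \<Rightarrow> real) \<Rightarrow> real) set" where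
  "P_gt1 n = {g. \<forall>S. S \<subseteq> {1..n} \<and> card S \<le> 1 \<longrightarrow> fourier n g S = 0}"

definition Lnorm :: "nat \<Rightarrow> ereal \<Rightarrow> ((nat \<Rightarrow> real) \<Rightarrow> real) \<Rightarrow> real" where
  "Lnorm n r h = (if r = \<infinity> then Max ((\<lambda>x. \<bar>h x\<bar>) ` cube n)
                  else (expect n (\<lambda>x. \<bar>h x\<bar> powr real_of_ereal r)) powr (1 / real_of_ereal r))"

definition rfactor :: "ereal \<Rightarrow> real" where
  "rfactor r = (if r = \<infinity> then 1 else (real_of_ereal r - 1) / real_of_ereal r)"

definition Qfun :: "nat \<Rightarrow> ereal \<Rightarrow> ((nat \<Rightarrow> real) \<Rightarrow> real) \<Rightarrow> real" where
  "Qfun n r f = \<bar>expect n f\<bar>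
     + Max (insert 0 ((\<lambda>i. \<bar>fourier n f {i}\<bar>) ` {1..n}))
     + sqrt (rfactor r) * sqrt (\<Sum>i=1..n. (fourier n f {i})\<^sup>2)"

end

theory Submission
  imports Defs "HOL-Probability.Hoeffding"
begin

text \<open>
  Both sides depend on \<open>f\<close> only through \<open>a = E f\<close> and the level-one coefficients
  \<open>b\<^sub>i\<close>, since subtracting \<open>g \<in> P_gt1 n\<close> changes neither.

  Lower bound: \<open>|a|\<close> and every \<open>|b\<^sub>i|\<close> are at most \<open>\<parallel>f - g\<parallel>\<^sub>1\<close>. Moreover
  \<open>\<Sum> b\<^sub>i\<^sup>2 = E[(f - g) \<Sum> b\<^sub>i x\<^sub>i] \<le> \<parallel>f - g\<parallel>\<^sub>r \<parallel>\<Sum> b\<^sub>i x\<^sub>i\<parallel>\<^sub>q\<close> with \<open>q = r / (r - 1)\<close>, and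
  Khintchine's inequality, obtained from the sub-Gaussian moment generating function of
  \<open>\<Sum> b\<^sub>i x\<^sub>i\<close>, bounds the last factor by \<open>6 sqrt q \<parallel>b\<parallel>\<^sub>2\<close>.

  Upper bound: it suffices to find \<open>h\<close> with the same \<open>a\<close> and \<open>b\<close> and small \<open>L\<^sub>r\<close> norm.
  For \<open>r \<ge> 2\<close>, a martingale transform of \<open>\<Sum> b\<^sub>i x\<^sub>i\<close> that is frozen once it leaves
  \<open>[-2\<parallel>b\<parallel>\<^sub>2, 2\<parallel>b\<parallel>\<^sub>2]\<close> is bounded by \<open>2\<parallel>b\<parallel>\<^sub>2 + 2 max |b\<^sub>i|\<close>. For \<open>1 < r \<le> 2\<close>, take
  \<open>h = a + \<theta> (R - 1)\<close> with the Riesz product \<open>R = \<Prod> (1 + b\<^sub>i x\<^sub>i / \<theta>)\<close> and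
  \<open>\<theta> = max |b\<^sub>i| + sqrt (r - 1) \<parallel>b\<parallel>\<^sub>2\<close>: since \<open>E R = 1\<close> and \<open>E R\<^sup>2 = \<Prod> (1 + b\<^sub>i\<^sup>2 / \<theta>\<^sup>2)\<close>,
  interpolating between the first and second moments gives \<open>E R\<^sup>r \<le> e\<close>.
\<close>

section \<open>Averages over the cube\<close>

lemma finite_cube [simp]: "finite (cube n)"
  unfolding cube_def by (auto intro!: finite_PiE)

lemma card_cube: "card (cube n) = 2 ^ n"
  unfolding cube_def by (simp add: card_PiE numeral_2_eq_2)

lemma cube_nonempty [simp]: "cube n \<noteq> {}"
  using card_cube[of n] by (metis card.empty power_not_zero zero_neq_numeral)

lemma cube_coord: "x \<in> cube n \<Longrightarrow> i \<in> {1..n} \<Longrightarrow> x i = 1 \<or> x i = -1"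
  unfolding cube_def by (auto simp: PiE_iff)

lemma abs_cube_coord: "x \<in> cube n \<Longrightarrow> i \<in> {1..n} \<Longrightarrow> \<bar>x i\<bar> = 1"
  using cube_coord by fastforce

lemma cube_coord_mult_self: "x \<in> cube n \<Longrightarrow> i \<in> {1..n} \<Longrightarrow> x i * x i = 1"
  using cube_coord by fastforce

lemma cube_flip: "x \<in> cube n \<Longrightarrow> i \<in> {1..n} \<Longrightarrow> x(i := - x i) \<in> cube n"
  unfolding cube_def by (auto simp: PiE_iff extensional_def)

lemma expect_cong: "(\<And>x. x \<in> cube n \<Longrightarrow> f x = g x) \<Longrightarrow> expect n f = expect n g"
  unfolding expect_def by (simp cong: sum.cong)

lemma expect_const [simp]: "expect n (\<lambda>x. c) = c"
  unfolding expect_def by (simp add: card_cube)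

lemma expect_add: "expect n (\<lambda>x. f x + g x) = expect n f + expect n g"
  unfolding expect_def by (simp add: sum.distrib add_divide_distrib)

lemma expect_diff: "expect n (\<lambda>x. f x - g x) = expect n f - expect n g"
  unfolding expect_def by (simp add: sum_subtractf diff_divide_distrib)

lemma expect_cmult: "expect n (\<lambda>x. c * f x) = c * expect n f"
  unfolding expect_def by (simp add: sum_distrib_left)

lemma expect_multc: "expect n (\<lambda>x. f x * c) = expect n f * c"
  unfolding expect_def by (simp add: sum_distrib_right)

lemma expect_sum: "finite I \<Longrightarrow> expect n (\<lambda>x. \<Sum>i\<in>I. f i x) = (\<Sum>i\<in>I. expect n (f i))"
  unfolding expect_def by (metis (no_types) sum.swap sum_divide_distrib)

lemma expect_mono: "(\<And>x. x \<in> cube n \<Longrightarrow> f x \<le> g x) \<Longrightarrow> expect n f \<le> expect n g"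
  unfolding expect_def by (intro divide_right_mono sum_mono) auto

lemma expect_nonneg: "(\<And>x. x \<in> cube n \<Longrightarrow> 0 \<le> f x) \<Longrightarrow> 0 \<le> expect n f"
  using expect_mono[of n "\<lambda>_. 0" f] by simp

lemma abs_expect_le: "\<bar>expect n f\<bar> \<le> expect n (\<lambda>x. \<bar>f x\<bar>)"
  unfolding expect_def by (simp add: divide_right_mono)

lemma expect_eq_0_imp_eq_0:
  assumes "\<And>x. x \<in> cube n \<Longrightarrow> 0 \<le> f x" "expect n f = 0" "x \<in> cube n"
  shows "f x = 0"
  using assms sum_nonneg_eq_0_iff[of "cube n" f] unfolding expect_def by auto

lemma expect_prod:
  "expect n (\<lambda>x. \<Prod>i\<in>{1..n}. \<phi> i (x i)) = (\<Prod>i\<in>{1..n}. (\<phi> i 1 + \<phi> i (-1)) / 2)"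
proof -
  have "(\<Prod>i\<in>{1..n}. \<Sum>y\<in>{-1,1::real}. \<phi> i y) = (\<Sum>x\<in>cube n. \<Prod>i\<in>{1..n}. \<phi> i (x i))"
    unfolding cube_def by (rule prod_sum_PiE) auto
  then show ?thesis
    unfolding expect_def by (simp add: prod_dividef add.commute)
qed

lemma expect_coord_mult_eq_0:
  assumes i: "i \<in> {1..n}" and F: "\<And>x. x \<in> cube n \<Longrightarrow> F (x(i := - x i)) = F x"
  shows "expect n (\<lambda>x. x i * F x) = 0"
proof -
  let ?flip = "\<lambda>x. x(i := - x i)"
  have "(\<Sum>x\<in>cube n. x i * F x) = (\<Sum>x\<in>cube n. ?flip x i * F (?flip x))"
    by (rule sum.reindex_bij_witness[of _ ?flip ?flip]) (auto simp: cube_flip[OF _ i])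
  also have "\<dots> = - (\<Sum>x\<in>cube n. x i * F x)"
    by (simp add: F sum_negf[symmetric])
  finally show ?thesis
    unfolding expect_def by simp
qed

lemma expect_coord: "i \<in> {1..n} \<Longrightarrow> expect n (\<lambda>x. x i) = 0"
  using expect_coord_mult_eq_0[of i n "\<lambda>_. 1"] by simp

lemma fourier_empty: "fourier n f {} = expect n f"
  by (simp add: fourier_def walsh_def)

lemma fourier_singleton: "fourier n f {i} = expect n (\<lambda>x. f x * x i)"
  by (simp add: fourier_def walsh_def)

lemma fourier_diff: "fourier n (\<lambda>x. f x - g x) S = fourier n f S - fourier n g S"
  unfolding fourier_def by (simp add: left_diff_distrib expect_diff)

lemma fourier_add_const:
  "i \<in> {1..n} \<Longrightarrow> fourier n (\<lambda>x. a + f x) {i} = fourier n f {i}"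
  by (simp add: fourier_singleton distrib_right expect_add expect_cmult expect_coord)

lemma fourier_P_gt1:
  "g \<in> P_gt1 n \<Longrightarrow> S \<subseteq> {1..n} \<Longrightarrow> card S \<le> 1 \<Longrightarrow> fourier n g S = 0"
  unfolding P_gt1_def by blast

lemma diff_in_P_gt1I:
  assumes "expect n h = expect n f" and "\<And>i. i \<in> {1..n} \<Longrightarrow> fourier n h {i} = fourier n f {i}"
  shows "(\<lambda>x. f x - h x) \<in> P_gt1 n"
  unfolding P_gt1_def
proof (intro CollectI allI impI, elim conjE)
  fix S assume S: "S \<subseteq> {1..n}" "card S \<le> 1"
  then have "S = {} \<or> (\<exists>i. S = {i})"
    by (metis card_0_eq card_1_singletonE finite_atLeastAtMost finite_subset le_Suc_eq
        le_zero_eq One_nat_def)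
  then show "fourier n (\<lambda>x. f x - h x) S = 0"
    using assms S by (auto simp: fourier_diff fourier_empty)
qed

section \<open>Hoelder and Khintchine inequalities on the cube\<close>

lemma expect_mult_eq_0_of_expect_powr_eq_0:
  assumes "\<And>x. x \<in> cube n \<Longrightarrow> 0 \<le> u x" and "expect n (\<lambda>x. u x powr p) = 0"
  shows "expect n (\<lambda>x. u x * v x) = 0"
proof -
  have "u x * v x = 0" if "x \<in> cube n" for x
    using expect_eq_0_imp_eq_0[of n "\<lambda>x. u x powr p" x] assms that by simp
  then show ?thesis
    using expect_cong[of n "\<lambda>x. u x * v x" "\<lambda>_. 0"] by simp
qed

lemma expect_holder:
  assumes pq: "1 < p" "1 < q" "1/p + 1/q = 1"
    and u: "\<And>x. x \<in> cube n \<Longrightarrow> 0 \<le> u x" and v: "\<And>x. x \<in> cube n \<Longrightarrow> 0 \<le> v x"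
  shows "expect n (\<lambda>x. u x * v x) \<le>
    expect n (\<lambda>x. u x powr p) powr (1/p) * expect n (\<lambda>x. v x powr q) powr (1/q)"
proof -
  define A where "A = expect n (\<lambda>x. u x powr p)"
  define B where "B = expect n (\<lambda>x. v x powr q)"
  have "0 \<le> A" "0 \<le> B"
    unfolding A_def B_def by (auto intro: expect_nonneg)
  show ?thesis
  proof (cases "A = 0 \<or> B = 0")
    case True
    then have "expect n (\<lambda>x. u x * v x) = 0"
      using expect_mult_eq_0_of_expect_powr_eq_0[of n u p v] u
        expect_mult_eq_0_of_expect_powr_eq_0[of n v q u] v
      by (auto simp: A_def B_def mult.commute)
    then show ?thesis by simp
  next
    case False
    with \<open>0 \<le> A\<close> \<open>0 \<le> B\<close> have "0 < A" "0 < B" by auto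
    define \<alpha> where "\<alpha> = A powr (1/p)"
    define \<beta> where "\<beta> = B powr (1/q)"
    have "0 < \<alpha>" "0 < \<beta>" "\<alpha> powr p = A" "\<beta> powr q = B"
      using \<open>0 < A\<close> \<open>0 < B\<close> pq by (auto simp: \<alpha>_def \<beta>_def powr_powr)
    have "u x * v x / (\<alpha> * \<beta>) \<le> u x powr p / A / p + v x powr q / B / q"
      if x: "x \<in> cube n" for x
    proof -
      have "u x / \<alpha> * (v x / \<beta>) \<le> (u x / \<alpha>) powr p / p + (v x / \<beta>) powr q / q"
        by (rule Youngs_inequality) (use pq u[OF x] v[OF x] \<open>0 < \<alpha>\<close> \<open>0 < \<beta>\<close> in auto)
      also have "(u x / \<alpha>) powr p = u x powr p / A"
        using u[OF x] \<open>0 < \<alpha>\<close> \<open>\<alpha> powr p = A\<close> by (simp add: powr_divide)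
      also have "(v x / \<beta>) powr q = v x powr q / B"
        using v[OF x] \<open>0 < \<beta>\<close> \<open>\<beta> powr q = B\<close> by (simp add: powr_divide)
      finally show ?thesis by simp
    qed
    then have "expect n (\<lambda>x. u x * v x / (\<alpha> * \<beta>))
        \<le> expect n (\<lambda>x. u x powr p / A / p + v x powr q / B / q)"
      by (rule expect_mono)
    also have "\<dots> = A / A / p + B / B / q"
      by (simp add: expect_add divide_inverse expect_multc A_def B_def)
    also have "\<dots> = 1"
      using \<open>0 < A\<close> \<open>0 < B\<close> pq by simp
    finally have "expect n (\<lambda>x. u x * v x) / (\<alpha> * \<beta>) \<le> 1"
      by (simp add: divide_inverse expect_multc)
    then show ?thesis
      using \<open>0 < \<alpha>\<close> \<open>0 < \<beta>\<close> by (simp add: \<alpha>_def \<beta>_def A_def B_def)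
  qed
qed

lemma expect_le_expect_powr:
  assumes p: "1 < p" and u: "\<And>x. x \<in> cube n \<Longrightarrow> 0 \<le> u x"
  shows "expect n u \<le> expect n (\<lambda>x. u x powr p) powr (1/p)"
  using expect_holder[OF p, of "p / (p - 1)" n u "\<lambda>_. 1"] p u by (simp add: field_simps)

definition conj_exp :: "ereal \<Rightarrow> real" where
  "conj_exp r = (if r = \<infinity> then 1 else real_of_ereal r / (real_of_ereal r - 1))"

lemma conj_exp_ge_1: "1 < r \<Longrightarrow> 1 \<le> conj_exp r"
  by (cases r) (auto simp: conj_exp_def)

lemma rfactor_nonneg: "1 < r \<Longrightarrow> 0 \<le> rfactor r"
  by (cases r) (auto simp: rfactor_def)

lemma rfactor_mult_conj_exp: "1 < r \<Longrightarrow> rfactor r * conj_exp r = 1"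
  by (cases r) (auto simp: conj_exp_def rfactor_def)

lemma Lnorm_ereal: "Lnorm n (ereal \<rho>) h = expect n (\<lambda>x. \<bar>h x\<bar> powr \<rho>) powr (1/\<rho>)"
  by (simp add: Lnorm_def)

lemma Lnorm_infinity: "Lnorm n \<infinity> h = Max ((\<lambda>x. \<bar>h x\<bar>) ` cube n)"
  by (simp add: Lnorm_def)

lemma abs_le_Lnorm_infinity: "x \<in> cube n \<Longrightarrow> \<bar>h x\<bar> \<le> Lnorm n \<infinity> h"
  by (simp add: Lnorm_infinity)

lemma Lnorm_nonneg: "0 \<le> Lnorm n r h"
proof (cases "r = \<infinity>")
  case True
  obtain x where "x \<in> cube n" using cube_nonempty by blast
  then show ?thesis
    using True abs_le_Lnorm_infinity[of x n h] by simp
qed (simp add: Lnorm_def)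

lemma expect_abs_mult_le_Lnorm:
  assumes "1 < r"
  shows "expect n (\<lambda>x. \<bar>u x * v x\<bar>)
    \<le> Lnorm n r u * expect n (\<lambda>x. \<bar>v x\<bar> powr conj_exp r) powr (1 / conj_exp r)"
proof (cases r)
  case (real \<rho>)
  with assms show ?thesis
    using expect_holder[of \<rho> "\<rho> / (\<rho> - 1)" n "\<lambda>x. \<bar>u x\<bar>" "\<lambda>x. \<bar>v x\<bar>"]
    by (simp add: abs_mult conj_exp_def Lnorm_ereal field_simps)
next
  case PInf
  have "expect n (\<lambda>x. \<bar>u x * v x\<bar>) \<le> expect n (\<lambda>x. Lnorm n \<infinity> u * \<bar>v x\<bar>)"
    by (rule expect_mono) (simp add: abs_mult mult_right_mono abs_le_Lnorm_infinity)
  then show ?thesis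
    using PInf expect_nonneg[of n "\<lambda>x. \<bar>v x\<bar>"] by (simp add: conj_exp_def expect_cmult)
qed (use assms in simp)

lemma expect_abs_le_Lnorm: "1 < r \<Longrightarrow> expect n (\<lambda>x. \<bar>h x\<bar>) \<le> Lnorm n r h"
  using expect_abs_mult_le_Lnorm[of r n h "\<lambda>_. 1"] by simp

lemma Lnorm_le_const:
  assumes "1 < r" and "\<And>x. x \<in> cube n \<Longrightarrow> \<bar>h x\<bar> \<le> K"
  shows "Lnorm n r h \<le> K"
proof (cases r)
  case (real \<rho>)
  obtain x where "x \<in> cube n" using cube_nonempty by blast
  then have "0 \<le> K" using assms(2) abs_ge_zero order_trans by blast
  have "expect n (\<lambda>x. \<bar>h x\<bar> powr \<rho>) \<le> K powr \<rho>"
    using expect_mono[of n "\<lambda>x. \<bar>h x\<bar> powr \<rho>" "\<lambda>_. K powr \<rho>"] assms real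
    by (simp add: powr_mono2)
  then have "expect n (\<lambda>x. \<bar>h x\<bar> powr \<rho>) powr (1/\<rho>) \<le> (K powr \<rho>) powr (1/\<rho>)"
    using assms real by (intro powr_mono2) (auto intro: expect_nonneg)
  then show ?thesis
    using assms real \<open>0 \<le> K\<close> by (simp add: Lnorm_ereal powr_powr)
qed (use assms in \<open>auto simp: Lnorm_infinity\<close>)

lemma Lnorm_le_of_dominated:
  assumes "0 < \<rho>" "0 \<le> K" and G: "\<And>x. x \<in> cube n \<Longrightarrow> 0 \<le> G x"
    and "\<And>x. x \<in> cube n \<Longrightarrow> \<bar>h x\<bar> \<le> K * G x"
    and "expect n (\<lambda>x. G x powr \<rho>) \<le> D"
  shows "Lnorm n (ereal \<rho>) h \<le> K * D powr (1/\<rho>)"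
proof -
  have "expect n (\<lambda>x. \<bar>h x\<bar> powr \<rho>) \<le> expect n (\<lambda>x. K powr \<rho> * G x powr \<rho>)"
    by (rule expect_mono) (use assms G in \<open>auto simp flip: powr_mult intro: powr_mono2\<close>)
  also have "\<dots> \<le> K powr \<rho> * D"
    using assms(5) by (simp add: expect_cmult mult_left_mono)
  finally have "expect n (\<lambda>x. \<bar>h x\<bar> powr \<rho>) powr (1/\<rho>) \<le> (K powr \<rho> * D) powr (1/\<rho>)"
    using assms(1) by (intro powr_mono2) (auto intro: expect_nonneg)
  also have "\<dots> = K * D powr (1/\<rho>)"
    using assms expect_nonneg[of n "\<lambda>x. G x powr \<rho>"] by (simp add: powr_mult powr_powr)
  finally show ?thesis
    by (simp add: Lnorm_ereal)
qed

lemma cosh_le_exp_half_square: "cosh x \<le> exp (x\<^sup>2 / 2)" for x :: real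
proof -
  have "cosh y \<le> exp (y\<^sup>2 / 2)" if "0 \<le> y" for y :: real
  proof -
    \<comment> \<open>Hoeffding's bound \<open>ln ((1 + e\<^sup>h) / 2) \<le> h / 2 + h\<^sup>2 / 8\<close> for a fair coin, at \<open>h = 2 y\<close>\<close>
    have "ln ((1 + exp (2 * y)) / 2) \<le> y\<^sup>2 / 2 + y"
      using Hoeffdings_lemma_aux[of "2 * y" "1/2"] that
      by (simp add: power2_eq_square field_simps)
    then have "(1 + exp (2 * y)) / 2 \<le> exp (y\<^sup>2 / 2 + y)"
      by (smt (verit) exp_gt_zero exp_le_cancel_iff exp_ln)
    then have "(1 + exp (2 * y)) / 2 * exp (- y) \<le> exp (y\<^sup>2 / 2 + y) * exp (- y)"
      by (rule mult_right_mono) simp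
    then show ?thesis
      by (simp add: cosh_field_def field_simps flip: exp_add)
  qed
  from this[of "\<bar>x\<bar>"] show ?thesis
    by (cases "0 \<le> x") auto
qed

definition linear_form :: "nat \<Rightarrow> (nat \<Rightarrow> real) \<Rightarrow> (nat \<Rightarrow> real) \<Rightarrow> real" where
  "linear_form n b x = (\<Sum>i\<in>{1..n}. b i * x i)"

lemma expect_exp_linear_form_le:
  "expect n (\<lambda>x. exp (t * linear_form n b x)) \<le> exp (t\<^sup>2 * (\<Sum>i\<in>{1..n}. (b i)\<^sup>2) / 2)"
proof -
  have "expect n (\<lambda>x. exp (t * linear_form n b x)) = (\<Prod>i\<in>{1..n}. cosh (t * b i))"
    using expect_prod[of n "\<lambda>i y. exp (t * b i * y)"]
    by (simp add: linear_form_def sum_distrib_left exp_sum mult.assoc cosh_field_def)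
  also have "\<dots> \<le> (\<Prod>i\<in>{1..n}. exp ((t * b i)\<^sup>2 / 2))"
    by (intro prod_mono conjI cosh_le_exp_half_square) (simp add: cosh_def)
  also have "\<dots> = exp (t\<^sup>2 * (\<Sum>i\<in>{1..n}. (b i)\<^sup>2) / 2)"
    by (simp add: exp_sum power_mult_distrib sum_distrib_left sum_divide_distrib)
  finally show ?thesis .
qed

lemma powr_le_exp_mult:
  fixes y t p :: real
  assumes "0 \<le> y" "0 < t" "0 < p"
  shows "y powr p \<le> (p / t) powr p * exp (t * y)"
proof (cases "y = 0")
  case False
  define z where "z = t * y / p"
  have "0 < z" "y = p / t * z"
    using assms False by (auto simp: z_def)
  have "z powr p = exp (p * ln z)"
    using \<open>0 < z\<close> by (simp add: powr_def)
  also have "\<dots> \<le> exp (p * z)"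
    using ln_le_minus_one[OF \<open>0 < z\<close>] assms(3) by simp
  also have "p * z = t * y"
    using assms by (simp add: z_def)
  finally have "(p / t) powr p * z powr p \<le> (p / t) powr p * exp (t * y)"
    by (rule mult_left_mono) simp
  moreover have "y powr p = (p / t) powr p * z powr p"
    using \<open>y = p / t * z\<close> \<open>0 < z\<close> assms by (simp only: powr_mult)
  ultimately show ?thesis by simp
qed simp

lemma expect_abs_linear_form_powr_le:
  assumes "0 < p"
  shows "expect n (\<lambda>x. \<bar>linear_form n b x\<bar> powr p)
    \<le> (sqrt p * sqrt (\<Sum>i\<in>{1..n}. (b i)\<^sup>2)) powr p * (2 * exp (p / 2))"
proof -
  define B2 where "B2 = (\<Sum>i\<in>{1..n}. (b i)\<^sup>2)"
  show ?thesis
  proof (cases "B2 = 0")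
    case True
    then have "linear_form n b x = 0" for x
      by (simp add: B2_def linear_form_def sum_nonneg_eq_0_iff)
    then show ?thesis
      by simp
  next
    case False
    then have "0 < B2"
      by (simp add: B2_def order_less_le sum_nonneg)
    define t where "t = sqrt p / sqrt B2"
    have "0 < t" "p / t = sqrt p * sqrt B2" "t\<^sup>2 * B2 / 2 = p / 2"
      using \<open>0 < B2\<close> assms by (auto simp: t_def field_simps)
    have "expect n (\<lambda>x. \<bar>linear_form n b x\<bar> powr p)
        \<le> expect n (\<lambda>x. (p / t) powr p * (exp (t * linear_form n b x) + exp ((- t) * linear_form n b x)))"
    proof (rule expect_mono)
      fix x
      have "\<bar>linear_form n b x\<bar> powr p \<le> (p / t) powr p * exp (t * \<bar>linear_form n b x\<bar>)"
        using \<open>0 < t\<close> assms by (intro powr_le_exp_mult) auto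
      also have "\<dots> \<le> (p / t) powr p * (exp (t * linear_form n b x) + exp ((- t) * linear_form n b x))"
        by (intro mult_left_mono) (auto simp: abs_if add_increasing add_increasing2)
      finally show "\<bar>linear_form n b x\<bar> powr p \<le> \<dots>" .
    qed
    also have "\<dots> \<le> (p / t) powr p * (exp (t\<^sup>2 * B2 / 2) + exp ((- t)\<^sup>2 * B2 / 2))"
      unfolding expect_cmult expect_add B2_def
      by (intro mult_left_mono add_mono expect_exp_linear_form_le) simp
    also have "\<dots> = (sqrt p * sqrt B2) powr p * (2 * exp (p / 2))"
      using \<open>p / t = sqrt p * sqrt B2\<close> \<open>t\<^sup>2 * B2 / 2 = p / 2\<close> by simp
    finally show ?thesis
      unfolding B2_def .
  qed
qed

lemma khintchine_upper:
  assumes "1 \<le> p"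
  shows "expect n (\<lambda>x. \<bar>linear_form n b x\<bar> powr p) powr (1/p)
    \<le> 6 * sqrt p * sqrt (\<Sum>i\<in>{1..n}. (b i)\<^sup>2)"
proof -
  define B2 where "B2 = (\<Sum>i\<in>{1..n}. (b i)\<^sup>2)"
  have "0 \<le> B2"
    by (simp add: B2_def sum_nonneg)
  have "expect n (\<lambda>x. \<bar>linear_form n b x\<bar> powr p) powr (1/p)
      \<le> ((sqrt p * sqrt B2) powr p * (2 * exp (p / 2))) powr (1/p)"
    using assms expect_abs_linear_form_powr_le[of p n b]
    by (intro powr_mono2) (auto simp: B2_def intro: expect_nonneg)
  also have "\<dots> = sqrt p * sqrt B2 * (2 powr (1/p) * exp (1/2))"
    using assms \<open>0 \<le> B2\<close> by (simp add: powr_mult powr_powr exp_powr_real)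
  also have "\<dots> \<le> sqrt p * sqrt B2 * (2 * 3)"
  proof -
    have "2 powr (1/p) \<le> 2"
      using assms powr_mono[of "1/p" 1 2] by simp
    moreover have "exp (1/2) \<le> (3::real)"
      using exp_le exp_le_cancel_iff[of "1/2" 1] by linarith
    ultimately show ?thesis
      using assms \<open>0 \<le> B2\<close> by (intro mult_left_mono mult_mono) auto
  qed
  finally show ?thesis
    by (simp add: B2_def)
qed

section \<open>The lower bound\<close>

lemma expect_mult_linear_form:
  "expect n (\<lambda>x. h x * linear_form n b x) = (\<Sum>i\<in>{1..n}. b i * fourier n h {i})"
  by (simp add: linear_form_def sum_distrib_left mult.left_commute expect_sum expect_cmult
      fourier_singleton)

lemma le_of_square_le_mult: "x\<^sup>2 \<le> K * x \<Longrightarrow> 0 \<le> K \<Longrightarrow> x \<le> K" for x K :: real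
  by (smt (verit) mult_cancel_right mult_right_mono power2_eq_square)

lemma level_one_norm_le_Lnorm:
  assumes "1 < r"
  shows "sqrt (rfactor r) * sqrt (\<Sum>i\<in>{1..n}. (fourier n h {i})\<^sup>2) \<le> 6 * Lnorm n r h"
proof -
  define b where "b i = fourier n h {i}" for i
  define q where "q = conj_exp r"
  define B2 where "B2 = (\<Sum>i\<in>{1..n}. (b i)\<^sup>2)"
  define s where "s = sqrt (rfactor r)"
  have "1 \<le> q" "s * sqrt q = 1"
    using assms conj_exp_ge_1 rfactor_mult_conj_exp
    by (auto simp: q_def s_def simp flip: real_sqrt_mult)
  have "B2 = expect n (\<lambda>x. h x * linear_form n b x)"
    by (simp add: expect_mult_linear_form B2_def b_def power2_eq_square)
  also have "\<dots> \<le> expect n (\<lambda>x. \<bar>h x * linear_form n b x\<bar>)"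
    using abs_expect_le by (rule order_trans[OF abs_ge_self])
  also have "\<dots> \<le> Lnorm n r h * expect n (\<lambda>x. \<bar>linear_form n b x\<bar> powr q) powr (1/q)"
    unfolding q_def by (rule expect_abs_mult_le_Lnorm[OF assms])
  also have "\<dots> \<le> Lnorm n r h * (6 * sqrt q * sqrt B2)"
    unfolding B2_def by (intro mult_left_mono khintchine_upper \<open>1 \<le> q\<close> Lnorm_nonneg)
  finally have B2_le: "B2 \<le> Lnorm n r h * (6 * sqrt q * sqrt B2)" .
  have "(s * sqrt B2)\<^sup>2 = s\<^sup>2 * B2"
    by (simp add: power_mult_distrib B2_def sum_nonneg)
  also have "\<dots> \<le> s\<^sup>2 * (Lnorm n r h * (6 * sqrt q * sqrt B2))"
    using B2_le by (rule mult_left_mono) simp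
  also have "\<dots> = 6 * Lnorm n r h * (s * sqrt B2) * (s * sqrt q)"
    by (simp add: power2_eq_square algebra_simps)
  finally have "(s * sqrt B2)\<^sup>2 \<le> 6 * Lnorm n r h * (s * sqrt B2)"
    using \<open>s * sqrt q = 1\<close> by simp
  then show ?thesis
    unfolding s_def B2_def b_def by (rule le_of_square_le_mult) (simp add: Lnorm_nonneg)
qed

lemma Qfun_le_Lnorm:
  assumes "1 < r"
  shows "Qfun n r h \<le> 8 * Lnorm n r h"
proof -
  have E1: "expect n (\<lambda>x. \<bar>h x\<bar>) \<le> Lnorm n r h"
    using expect_abs_le_Lnorm[OF assms] .
  have "\<bar>fourier n h {i}\<bar> \<le> Lnorm n r h" if "i \<in> {1..n}" for i
  proof -
    have "\<bar>fourier n h {i}\<bar> \<le> expect n (\<lambda>x. \<bar>h x * x i\<bar>)"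
      unfolding fourier_singleton by (rule abs_expect_le)
    also have "\<dots> = expect n (\<lambda>x. \<bar>h x\<bar>)"
      by (rule expect_cong) (simp add: abs_mult abs_cube_coord[OF _ that])
    finally show ?thesis using E1 by linarith
  qed
  then have "Max (insert 0 ((\<lambda>i. \<bar>fourier n h {i}\<bar>) ` {1..n})) \<le> Lnorm n r h"
    by (auto simp: Lnorm_nonneg)
  moreover have "\<bar>expect n h\<bar> \<le> Lnorm n r h"
    using abs_expect_le E1 by (rule order_trans)
  ultimately show ?thesis
    using level_one_norm_le_Lnorm[OF assms, of n h] unfolding Qfun_def by linarith
qed

lemma Qfun_diff_P_gt1: "g \<in> P_gt1 n \<Longrightarrow> Qfun n r (\<lambda>x. f x - g x) = Qfun n r f"
  using fourier_P_gt1[of g n "{}"] fourier_P_gt1[of g n "{_}"]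
  by (auto simp: Qfun_def fourier_diff simp flip: fourier_empty intro!: sum.cong image_cong)

lemma zero_in_P_gt1: "(\<lambda>_. 0) \<in> P_gt1 n"
  by (simp add: P_gt1_def fourier_def expect_def)

lemma Qfun_le_INF_Lnorm:
  assumes "1 < r"
  shows "1/8 * Qfun n r f \<le> (INF g\<in>P_gt1 n. Lnorm n r (\<lambda>x. f x - g x))"
proof (rule cINF_greatest)
  show "P_gt1 n \<noteq> {}"
    using zero_in_P_gt1 by blast
  fix g assume "g \<in> P_gt1 n"
  then show "1/8 * Qfun n r f \<le> Lnorm n r (\<lambda>x. f x - g x)"
    using Qfun_le_Lnorm[OF assms, of n "\<lambda>x. f x - g x"] by (simp add: Qfun_diff_P_gt1)
qed

section \<open>A bounded function with prescribed level-one coefficients\<close>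

definition stay_prob :: "nat \<Rightarrow> real \<Rightarrow> ((nat \<Rightarrow> real) \<Rightarrow> real) \<Rightarrow> real" where
  "stay_prob n K s = expect n (\<lambda>x. of_bool (\<bar>s x\<bar> \<le> K))"

definition stay_weight :: "nat \<Rightarrow> real \<Rightarrow> ((nat \<Rightarrow> real) \<Rightarrow> real) \<Rightarrow> (nat \<Rightarrow> real) \<Rightarrow> real" where
  "stay_weight n K s x = of_bool (\<bar>s x\<bar> \<le> K) / stay_prob n K s"

text \<open>The increments stop once \<open>|S\<^sub>k| > K\<close>; dividing them by the probability of not yet having
  stopped keeps every correlation \<open>E[S\<^sub>k x\<^sub>j]\<close>, \<open>j \<le> k\<close>, equal to \<open>b\<^sub>j\<close>.\<close>

primrec stopped_sum :: "nat \<Rightarrow> (nat \<Rightarrow> real) \<Rightarrow> real \<Rightarrow> nat \<Rightarrow> (nat \<Rightarrow> real) \<Rightarrow> real" where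
  "stopped_sum n b K 0 = (\<lambda>x. 0)"
| "stopped_sum n b K (Suc k) = (\<lambda>x. stopped_sum n b K k x
     + b (Suc k) * x (Suc k) * stay_weight n K (stopped_sum n b K k) x)"

lemma stopped_sum_upd: "k < j \<Longrightarrow> stopped_sum n b K k (x(j := v)) = stopped_sum n b K k x"
  by (induction k) (auto simp: stay_weight_def)

lemma stay_weight_upd:
  "k < j \<Longrightarrow> stay_weight n K (stopped_sum n b K k) (x(j := v)) = stay_weight n K (stopped_sum n b K k) x"
  by (simp add: stay_weight_def stopped_sum_upd)

lemma stay_prob_ge:
  assumes "0 < K"
  shows "1 - expect n (\<lambda>x. (s x)\<^sup>2) / K\<^sup>2 \<le> stay_prob n K s"
proof -
  have "1 - (s x)\<^sup>2 / K\<^sup>2 \<le> of_bool (\<bar>s x\<bar> \<le> K)" for x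
    using assms abs_le_square_iff[of K "s x"] by (auto simp: field_simps)
  then have "expect n (\<lambda>x. 1 - (s x)\<^sup>2 / K\<^sup>2) \<le> stay_prob n K s"
    unfolding stay_prob_def by (rule expect_mono)
  then show ?thesis
    by (simp add: expect_diff expect_multc divide_inverse)
qed

lemma stay_prob_ge_half:
  assumes "0 < K" "expect n (\<lambda>x. (s x)\<^sup>2) \<le> K\<^sup>2 / 2"
  shows "1/2 \<le> stay_prob n K s"
proof -
  have "expect n (\<lambda>x. (s x)\<^sup>2) / K\<^sup>2 \<le> 1/2"
    using assms by (simp add: field_simps)
  then show ?thesis
    using stay_prob_ge[OF assms(1), of n s] by linarith
qed

lemma expect_stay_weight: "0 < stay_prob n K s \<Longrightarrow> expect n (stay_weight n K s) = 1"
  unfolding stay_weight_def by (simp add: divide_inverse expect_multc flip: stay_prob_def)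

lemma expect_stay_weight_square:
  assumes "0 < stay_prob n K s"
  shows "expect n (\<lambda>x. (stay_weight n K s x)\<^sup>2) = 1 / stay_prob n K s"
proof -
  have "expect n (\<lambda>x. (stay_weight n K s x)\<^sup>2)
      = expect n (\<lambda>x. of_bool (\<bar>s x\<bar> \<le> K) * (1 / (stay_prob n K s)\<^sup>2))"
    by (rule expect_cong) (simp add: stay_weight_def power_divide)
  also have "\<dots> = stay_prob n K s * (1 / (stay_prob n K s)\<^sup>2)"
    by (simp only: expect_multc stay_prob_def)
  finally show ?thesis
    using assms by (simp add: power2_eq_square)
qed

lemma expect_stopped_sum: "k \<le> n \<Longrightarrow> expect n (stopped_sum n b K k) = 0"
proof (induction k)
  case (Suc k)
  then have "Suc k \<in> {1..n}" by simp
  then have "expect n (\<lambda>x. x (Suc k) * stay_weight n K (stopped_sum n b K k) x) = 0"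
    by (rule expect_coord_mult_eq_0) (simp add: stay_weight_upd)
  then show ?case
    using Suc by (simp add: expect_add expect_cmult mult.assoc)
qed simp

lemma expect_coord_stay_weight_coord:
  assumes i: "Suc k \<in> {1..n}" and j: "j \<in> {1..n}" and "0 < stay_prob n K (stopped_sum n b K k)"
  shows "expect n (\<lambda>x. x (Suc k) * stay_weight n K (stopped_sum n b K k) x * x j) = of_bool (j = Suc k)"
proof -
  let ?w = "stay_weight n K (stopped_sum n b K k)"
  consider "j = Suc k" | "j \<le> k" | "Suc k < j" by linarith
  then show ?thesis
  proof cases
    case 1
    then show ?thesis
      using assms expect_stay_weight[of n K] expect_cong[of n "\<lambda>x. x (Suc k) * ?w x * x j" ?w]
      by (simp add: cube_coord_mult_self[OF _ i] mult.commute mult.left_commute)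
  next
    case 2
    then have "expect n (\<lambda>x. x (Suc k) * (?w x * x j)) = 0"
      by (intro expect_coord_mult_eq_0[OF i]) (simp add: stay_weight_upd)
    then show ?thesis
      using 2 by (simp add: mult.assoc)
  next
    case 3
    then have "expect n (\<lambda>x. x j * (x (Suc k) * ?w x)) = 0"
      by (intro expect_coord_mult_eq_0[OF j]) (simp add: stay_weight_upd)
    then show ?thesis
      using 3 by (simp add: mult.commute)
  qed
qed

context
  fixes n :: nat and b :: "nat \<Rightarrow> real" and K :: real
  assumes K_pos: "0 < K" and K_large: "4 * (\<Sum>i\<in>{1..n}. (b i)\<^sup>2) \<le> K\<^sup>2"
begin

lemma expect_stopped_sum_square:
  "k \<le> n \<Longrightarrow> expect n (\<lambda>x. (stopped_sum n b K k x)\<^sup>2) \<le> 2 * (\<Sum>i\<in>{1..k}. (b i)\<^sup>2)"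
proof (induction k)
  case (Suc k)
  let ?S = "stopped_sum n b K k" and ?w = "stay_weight n K (stopped_sum n b K k)"
  have i: "Suc k \<in> {1..n}" and IH: "expect n (\<lambda>x. (?S x)\<^sup>2) \<le> 2 * (\<Sum>i\<in>{1..k}. (b i)\<^sup>2)"
    using Suc by auto
  have "(\<Sum>i\<in>{1..k}. (b i)\<^sup>2) \<le> (\<Sum>i\<in>{1..n}. (b i)\<^sup>2)"
    using Suc.prems by (intro sum_mono2) auto
  then have P: "1/2 \<le> stay_prob n K ?S"
    using IH K_pos K_large by (intro stay_prob_ge_half) auto
  have cross: "expect n (\<lambda>x. x (Suc k) * (?S x * ?w x)) = 0"
    by (rule expect_coord_mult_eq_0[OF i]) (simp add: stopped_sum_upd stay_weight_upd)
  have "expect n (\<lambda>x. (stopped_sum n b K (Suc k) x)\<^sup>2)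
      = expect n (\<lambda>x. (?S x)\<^sup>2 + 2 * b (Suc k) * (x (Suc k) * (?S x * ?w x)) + (b (Suc k))\<^sup>2 * (?w x)\<^sup>2)"
    by (rule expect_cong) (simp add: power2_eq_square algebra_simps cube_coord_mult_self[OF _ i])
  also have "\<dots> = expect n (\<lambda>x. (?S x)\<^sup>2) + (b (Suc k))\<^sup>2 / stay_prob n K ?S"
    using P by (simp add: expect_add expect_cmult cross expect_stay_weight_square)
  also have "\<dots> \<le> 2 * (\<Sum>i\<in>{1..k}. (b i)\<^sup>2) + (b (Suc k))\<^sup>2 * 2"
  proof -
    have "1 / stay_prob n K ?S \<le> 2"
      using P by (simp add: field_simps)
    from mult_left_mono[OF this, of "(b (Suc k))\<^sup>2"] show ?thesis
      using IH by simp
  qed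
  finally show ?case by simp
qed simp

lemma stay_prob_stopped_sum: "k \<le> n \<Longrightarrow> 1/2 \<le> stay_prob n K (stopped_sum n b K k)"
proof -
  assume "k \<le> n"
  then have "(\<Sum>i\<in>{1..k}. (b i)\<^sup>2) \<le> (\<Sum>i\<in>{1..n}. (b i)\<^sup>2)"
    by (intro sum_mono2) auto
  then show ?thesis
    using expect_stopped_sum_square[OF \<open>k \<le> n\<close>] K_pos K_large by (intro stay_prob_ge_half) auto
qed

lemma abs_stopped_sum_le:
  assumes "\<And>i. i \<in> {1..n} \<Longrightarrow> \<bar>b i\<bar> \<le> M" "0 \<le> M" "x \<in> cube n"
  shows "k \<le> n \<Longrightarrow> \<bar>stopped_sum n b K k x\<bar> \<le> K + 2 * M"
proof (induction k)
  case (Suc k)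
  let ?S = "stopped_sum n b K k"
  have i: "Suc k \<in> {1..n}" and P: "1/2 \<le> stay_prob n K ?S"
    using Suc.prems stay_prob_stopped_sum[of k] by auto
  show ?case
  proof (cases "\<bar>?S x\<bar> \<le> K")
    case True
    have "\<bar>b (Suc k) * x (Suc k) * stay_weight n K ?S x\<bar> = \<bar>b (Suc k)\<bar> / stay_prob n K ?S"
      using True P by (simp add: stay_weight_def abs_mult abs_cube_coord[OF assms(3) i])
    also have "\<dots> = \<bar>b (Suc k)\<bar> * (1 / stay_prob n K ?S)"
      by simp
    also have "\<dots> \<le> M * 2"
      using assms(1)[OF i] P by (intro mult_mono) (auto simp: field_simps)
    finally show ?thesis
      using True by simp
  next
    case False
    then show ?thesis
      using Suc by (simp add: stay_weight_def)
  qed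
qed (use K_pos assms(2) in simp)

lemma fourier_stopped_sum:
  "k \<le> n \<Longrightarrow> j \<in> {1..n} \<Longrightarrow> fourier n (stopped_sum n b K k) {j} = (if j \<le> k then b j else 0)"
proof (induction k)
  case (Suc k)
  have i: "Suc k \<in> {1..n}" and P: "0 < stay_prob n K (stopped_sum n b K k)"
    using Suc.prems stay_prob_stopped_sum[of k] by auto
  from expect_coord_stay_weight_coord[OF i Suc.prems(2) P] Suc show ?case
    by (auto simp: fourier_singleton distrib_right expect_add expect_cmult mult.assoc le_Suc_eq)
qed (simp add: fourier_singleton)

end

lemma bounded_level_one_extension:
  assumes "\<And>i. i \<in> {1..n} \<Longrightarrow> \<bar>b i\<bar> \<le> M" "0 \<le> M"
  obtains h where "expect n h = 0" "\<And>j. j \<in> {1..n} \<Longrightarrow> fourier n h {j} = b j"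
    "\<And>x. x \<in> cube n \<Longrightarrow> \<bar>h x\<bar> \<le> 2 * sqrt (\<Sum>i\<in>{1..n}. (b i)\<^sup>2) + 2 * M"
proof (cases "\<forall>i\<in>{1..n}. b i = 0")
  case True
  then show ?thesis
    using that[of "\<lambda>_. 0"] assms(2) by (simp add: fourier_singleton)
next
  case False
  define K where "K = 2 * sqrt (\<Sum>i\<in>{1..n}. (b i)\<^sup>2)"
  obtain i where "i \<in> {1..n}" "b i \<noteq> 0"
    using False by blast
  then have "0 < (\<Sum>i\<in>{1..n}. (b i)\<^sup>2)"
    by (intro sum_pos2[of _ i]) auto
  then have "0 < K" "4 * (\<Sum>i\<in>{1..n}. (b i)\<^sup>2) \<le> K\<^sup>2"
    by (auto simp: K_def power_mult_distrib)
  then show ?thesis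
    using that[of "stopped_sum n b K n"] expect_stopped_sum fourier_stopped_sum
      abs_stopped_sum_le[OF _ _ assms]
    by (auto simp: K_def)
qed

section \<open>Riesz products\<close>

lemma powr_le_interpolation:
  fixes u \<rho> :: real
  assumes "0 \<le> u" "1 \<le> \<rho>" "\<rho> \<le> 2"
  shows "u powr \<rho> \<le> (2 - \<rho>) * u + (\<rho> - 1) * u\<^sup>2"
proof (cases "u = 0")
  case False
  with assms have "0 < u" by simp
  have "u powr \<rho> = u powr (2 - \<rho>) * (u powr 2) powr (\<rho> - 1)"
    by (simp add: powr_powr flip: powr_add)
  also have "\<dots> \<le> (2 - \<rho>) * u + (\<rho> - 1) * u\<^sup>2"
    using Youngs_inequality_0[of "2 - \<rho>" "\<rho> - 1" u "u\<^sup>2"] assms \<open>0 < u\<close>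
    by (simp add: powr_numeral)
  finally show ?thesis .
qed (use assms in simp)

lemma expect_powr_le_interpolation:
  assumes u: "\<And>x. x \<in> cube n \<Longrightarrow> 0 \<le> u x" and "expect n u = 1" and \<rho>: "1 \<le> \<rho>" "\<rho> \<le> 2"
  shows "expect n (\<lambda>x. u x powr \<rho>) \<le> expect n (\<lambda>x. (u x)\<^sup>2) powr (\<rho> - 1)"
proof -
  define S where "S = expect n (\<lambda>x. (u x)\<^sup>2)"
  have "0 \<le> S"
    unfolding S_def by (rule expect_nonneg) simp
  have "expect n (\<lambda>x. u x powr 2) = S"
    unfolding S_def by (rule expect_cong) (simp add: u powr_numeral)
  then have "1 \<le> sqrt S"
    using expect_le_expect_powr[of 2 n u] u \<open>expect n u = 1\<close> \<open>0 \<le> S\<close> by (simp add: powr_half_sqrt)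
  then have "1 \<le> S" by simp
  have "expect n (\<lambda>x. u x powr \<rho>) = expect n (\<lambda>x. S powr \<rho> * (u x / S) powr \<rho>)"
    by (rule expect_cong) (use \<open>1 \<le> S\<close> u in \<open>simp add: powr_divide\<close>)
  also have "\<dots> \<le> expect n (\<lambda>x. S powr \<rho> * ((2 - \<rho>) / S * u x + (\<rho> - 1) / S\<^sup>2 * (u x)\<^sup>2))"
  proof (rule expect_mono)
    fix x assume "x \<in> cube n"
    then have "(u x / S) powr \<rho> \<le> (2 - \<rho>) * (u x / S) + (\<rho> - 1) * (u x / S)\<^sup>2"
      using \<open>1 \<le> S\<close> u \<rho> by (intro powr_le_interpolation) auto
    then show "S powr \<rho> * (u x / S) powr \<rho> \<le> S powr \<rho> * ((2 - \<rho>) / S * u x + (\<rho> - 1) / S\<^sup>2 * (u x)\<^sup>2)"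
      by (intro mult_left_mono) (simp_all add: power_divide)
  qed
  also have "\<dots> = S powr \<rho> * ((2 - \<rho>) / S * expect n u + (\<rho> - 1) / S\<^sup>2 * S)"
    by (simp only: expect_cmult expect_add S_def)
  also have "\<dots> = S powr \<rho> / S"
    using \<open>1 \<le> S\<close> \<open>expect n u = 1\<close> by (simp add: power2_eq_square field_simps)
  also have "\<dots> = S powr (\<rho> - 1)"
    using \<open>1 \<le> S\<close> by (simp add: powr_diff)
  finally show ?thesis
    unfolding S_def .
qed

definition riesz_product :: "nat \<Rightarrow> (nat \<Rightarrow> real) \<Rightarrow> (nat \<Rightarrow> real) \<Rightarrow> real" where
  "riesz_product n c x = (\<Prod>i\<in>{1..n}. 1 + c i * x i)"

lemma riesz_product_nonneg:
  assumes "\<And>i. i \<in> {1..n} \<Longrightarrow> \<bar>c i\<bar> \<le> 1" and "x \<in> cube n"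
  shows "0 \<le> riesz_product n c x"
  unfolding riesz_product_def
proof (rule prod_nonneg)
  fix i assume "i \<in> {1..n}"
  then have "\<bar>c i * x i\<bar> \<le> 1"
    using assms by (simp add: abs_mult abs_cube_coord)
  then show "0 \<le> 1 + c i * x i" by linarith
qed

lemma expect_riesz_product: "expect n (riesz_product n c) = 1"
  using expect_prod[of n "\<lambda>i y. 1 + c i * y"] by (simp add: riesz_product_def[abs_def])

lemma fourier_riesz_product:
  assumes "j \<in> {1..n}"
  shows "fourier n (riesz_product n c) {j} = c j"
proof -
  have "fourier n (riesz_product n c) {j}
      = expect n (\<lambda>x. \<Prod>i\<in>{1..n}. (1 + c i * x i) * (if i = j then x i else 1))"
    using assms by (simp add: fourier_singleton riesz_product_def prod.distrib prod.delta)
  also have "\<dots> = (\<Prod>i\<in>{1..n}. if i = j then c i else 1)"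
    by (subst expect_prod) (rule prod.cong, auto)
  also have "\<dots> = c j"
    using assms by simp
  finally show ?thesis .
qed

lemma expect_riesz_product_square:
  "expect n (\<lambda>x. (riesz_product n c x)\<^sup>2) = (\<Prod>i\<in>{1..n}. 1 + (c i)\<^sup>2)"
proof -
  have "expect n (\<lambda>x. (riesz_product n c x)\<^sup>2) = expect n (\<lambda>x. \<Prod>i\<in>{1..n}. (1 + c i * x i)\<^sup>2)"
    by (simp add: riesz_product_def prod_power_distrib)
  also have "\<dots> = (\<Prod>i\<in>{1..n}. ((1 + c i * 1)\<^sup>2 + (1 + c i * (-1))\<^sup>2) / 2)"
    by (rule expect_prod)
  also have "\<dots> = (\<Prod>i\<in>{1..n}. 1 + (c i)\<^sup>2)"
    by (rule prod.cong) (auto simp: power2_eq_square algebra_simps)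
  finally show ?thesis .
qed

lemma expect_riesz_product_powr:
  assumes "\<And>i. i \<in> {1..n} \<Longrightarrow> \<bar>c i\<bar> \<le> 1" and "1 \<le> \<rho>" "\<rho> \<le> 2"
  shows "expect n (\<lambda>x. riesz_product n c x powr \<rho>) \<le> exp ((\<rho> - 1) * (\<Sum>i\<in>{1..n}. (c i)\<^sup>2))"
proof -
  have "expect n (\<lambda>x. riesz_product n c x powr \<rho>)
      \<le> expect n (\<lambda>x. (riesz_product n c x)\<^sup>2) powr (\<rho> - 1)"
    by (rule expect_powr_le_interpolation)
      (use assms in \<open>auto intro: riesz_product_nonneg simp: expect_riesz_product\<close>)
  also have "\<dots> = (\<Prod>i\<in>{1..n}. 1 + (c i)\<^sup>2) powr (\<rho> - 1)"
    by (simp add: expect_riesz_product_square)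
  also have "\<dots> \<le> exp (\<Sum>i\<in>{1..n}. (c i)\<^sup>2) powr (\<rho> - 1)"
    using assms by (intro powr_mono2 prod_nonneg)
      (auto simp: exp_sum intro!: prod_mono add_nonneg_nonneg)
  also have "\<dots> = exp ((\<rho> - 1) * (\<Sum>i\<in>{1..n}. (c i)\<^sup>2))"
    by (simp add: exp_powr_real mult.commute)
  finally show ?thesis .
qed

lemma one_plus_powr_le:
  fixes R \<rho> :: real
  assumes "0 \<le> R" "0 \<le> \<rho>" "\<rho> \<le> 2"
  shows "(1 + R) powr \<rho> \<le> 4 * (1 + R powr \<rho>)"
proof -
  have "(1 + R) powr \<rho> \<le> (2 * max 1 R) powr \<rho>"
    using assms by (intro powr_mono2) auto
  also have "\<dots> = 2 powr \<rho> * max 1 R powr \<rho>"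
    using assms by (simp add: powr_mult)
  also have "\<dots> \<le> 4 * (1 + R powr \<rho>)"
  proof (intro mult_mono)
    show "2 powr \<rho> \<le> (4::real)"
      using powr_mono[of \<rho> 2 2] assms by simp
    show "max 1 R powr \<rho> \<le> 1 + R powr \<rho>"
      by (cases "R \<le> 1") (auto simp: max_def)
  qed auto
  finally show ?thesis .
qed

lemma abs_affine_le:
  fixes a \<theta> R :: real
  assumes "0 \<le> \<theta>" "0 \<le> R"
  shows "\<bar>a + \<theta> * (R - 1)\<bar> \<le> (\<bar>a\<bar> + 2 * \<theta>) * (1 + R)"
proof -
  have "0 \<le> \<theta> * R" "0 \<le> \<bar>a\<bar> * R"
    using assms by simp_all
  then have "\<bar>a + \<theta> * (R - 1)\<bar> \<le> \<bar>a\<bar> + \<bar>a\<bar> * R + 2 * \<theta> + 2 * (\<theta> * R)"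
    using assms unfolding right_diff_distrib by linarith
  also have "\<dots> = (\<bar>a\<bar> + 2 * \<theta>) * (1 + R)"
    by (simp add: algebra_simps)
  finally show ?thesis .
qed

lemma expect_one_plus_riesz_product_powr:
  assumes "\<And>i. i \<in> {1..n} \<Longrightarrow> \<bar>c i\<bar> \<le> 1" and "(\<rho> - 1) * (\<Sum>i\<in>{1..n}. (c i)\<^sup>2) \<le> 1"
    and "1 \<le> \<rho>" "\<rho> \<le> 2"
  shows "expect n (\<lambda>x. (1 + riesz_product n c x) powr \<rho>) \<le> 16"
proof -
  have "expect n (\<lambda>x. (1 + riesz_product n c x) powr \<rho>)
      \<le> expect n (\<lambda>x. 4 * (1 + riesz_product n c x powr \<rho>))"
    using assms by (intro expect_mono one_plus_powr_le) (auto intro: riesz_product_nonneg)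
  also have "\<dots> = 4 + 4 * expect n (\<lambda>x. riesz_product n c x powr \<rho>)"
    by (simp add: expect_cmult expect_add)
  also have "\<dots> \<le> 4 + 4 * exp 1"
    using order_trans[OF expect_riesz_product_powr[OF assms(1,3,4)]] assms(2) by simp
  also have "\<dots> \<le> 16"
    using exp_le by simp
  finally show ?thesis .
qed

lemma Lnorm_affine_riesz_product:
  assumes c: "\<And>i. i \<in> {1..n} \<Longrightarrow> \<bar>c i\<bar> \<le> 1" and "(\<rho> - 1) * (\<Sum>i\<in>{1..n}. (c i)\<^sup>2) \<le> 1"
    and \<rho>: "1 < \<rho>" "\<rho> \<le> 2" and "0 \<le> \<theta>"
  shows "Lnorm n (ereal \<rho>) (\<lambda>x. a + \<theta> * (riesz_product n c x - 1)) \<le> 16 * (\<bar>a\<bar> + 2 * \<theta>)"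
proof -
  have "Lnorm n (ereal \<rho>) (\<lambda>x. a + \<theta> * (riesz_product n c x - 1)) \<le> (\<bar>a\<bar> + 2 * \<theta>) * 16 powr (1/\<rho>)"
  proof (rule Lnorm_le_of_dominated[where G = "\<lambda>x. 1 + riesz_product n c x"])
    show "0 \<le> 1 + riesz_product n c x"
      "\<bar>a + \<theta> * (riesz_product n c x - 1)\<bar> \<le> (\<bar>a\<bar> + 2 * \<theta>) * (1 + riesz_product n c x)"
      if "x \<in> cube n" for x
      using riesz_product_nonneg[OF c that] \<open>0 \<le> \<theta>\<close> abs_affine_le by auto
    show "expect n (\<lambda>x. (1 + riesz_product n c x) powr \<rho>) \<le> 16"
      using assms by (intro expect_one_plus_riesz_product_powr) auto
  qed (use assms in auto)
  moreover have "16 powr (1/\<rho>) \<le> (16::real)"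
    using powr_mono[of "1/\<rho>" 1 16] \<rho> by simp
  then have "(\<bar>a\<bar> + 2 * \<theta>) * 16 powr (1/\<rho>) \<le> 16 * (\<bar>a\<bar> + 2 * \<theta>)"
    using \<open>0 \<le> \<theta>\<close> mult_left_mono[of "16 powr (1/\<rho>)" 16 "\<bar>a\<bar> + 2 * \<theta>"]
    by (simp add: mult.commute)
  ultimately show ?thesis
    by linarith
qed

lemma riesz_level_one_extension:
  assumes \<rho>: "1 < \<rho>" "\<rho> \<le> 2" and "0 \<le> \<theta>" and b_le: "\<And>i. i \<in> {1..n} \<Longrightarrow> \<bar>b i\<bar> \<le> \<theta>"
    and b_sq: "(\<rho> - 1) * (\<Sum>i\<in>{1..n}. (b i)\<^sup>2) \<le> \<theta>\<^sup>2"
  obtains h where "expect n h = a" "\<And>j. j \<in> {1..n} \<Longrightarrow> fourier n h {j} = b j"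
    "Lnorm n (ereal \<rho>) h \<le> 16 * (\<bar>a\<bar> + 2 * \<theta>)"
proof -
  define c where "c i = b i / \<theta>" for i
  define R where "R = riesz_product n c"
  have c_le: "\<bar>c i\<bar> \<le> 1" and b_eq: "b i = \<theta> * c i" if "i \<in> {1..n}" for i
    using b_le[OF that] \<open>0 \<le> \<theta>\<close> by (auto simp: c_def abs_divide divide_le_eq_1)
  have c_sq: "(\<rho> - 1) * (\<Sum>i\<in>{1..n}. (c i)\<^sup>2) \<le> 1"
  proof (cases "\<theta> = 0")
    case False
    then show ?thesis
      using b_sq by (simp add: c_def power_divide field_simps flip: sum_divide_distrib)
  qed (simp add: c_def)
  have "expect n (\<lambda>x. a + \<theta> * (R x - 1)) = a"
    by (simp add: R_def expect_add expect_cmult expect_diff expect_riesz_product)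
  moreover have "fourier n (\<lambda>x. a + \<theta> * (R x - 1)) {j} = b j" if "j \<in> {1..n}" for j
  proof -
    have "fourier n (\<lambda>x. a + \<theta> * (R x - 1)) {j}
        = expect n (\<lambda>x. a * x j + \<theta> * (R x * x j) - \<theta> * x j)"
      unfolding fourier_singleton by (intro expect_cong) (simp add: algebra_simps)
    also have "\<dots> = b j"
      using that b_eq[OF that]
      by (simp add: expect_diff expect_add expect_cmult expect_coord R_def fourier_riesz_product
          flip: fourier_singleton)
    finally show ?thesis .
  qed
  moreover have "Lnorm n (ereal \<rho>) (\<lambda>x. a + \<theta> * (R x - 1)) \<le> 16 * (\<bar>a\<bar> + 2 * \<theta>)"
    unfolding R_def using c_le c_sq \<rho> \<open>0 \<le> \<theta>\<close> by (rule Lnorm_affine_riesz_product)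
  ultimately show ?thesis
    using that[of "\<lambda>x. a + \<theta> * (R x - 1)"] by simp
qed

section \<open>The upper bound\<close>

lemma rfactor_ge_half: "2 \<le> r \<Longrightarrow> 1/2 \<le> rfactor r"
  by (cases r) (auto simp: rfactor_def field_simps)

lemma sqrt_minus_one_le_sqrt_rfactor:
  assumes "1 < \<rho>" "\<rho> \<le> 2"
  shows "sqrt (\<rho> - 1) \<le> 3/2 * sqrt (rfactor (ereal \<rho>))"
proof -
  have "sqrt (\<rho> - 1) = sqrt \<rho> * sqrt (rfactor (ereal \<rho>))"
    using assms by (simp add: rfactor_def flip: real_sqrt_mult)
  also have "\<dots> \<le> 3/2 * sqrt (rfactor (ereal \<rho>))"
    using assms rfactor_nonneg[of "ereal \<rho>"]
    by (intro mult_right_mono real_le_lsqrt) (auto simp: power2_eq_square)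
  finally show ?thesis .
qed

lemma abs_fourier_le_Max:
  "i \<in> {1..n} \<Longrightarrow> \<bar>fourier n f {i}\<bar> \<le> Max (insert 0 ((\<lambda>i. \<bar>fourier n f {i}\<bar>) ` {1..n}))"
  by (intro Max_ge) auto

lemma Lnorm_extension_large_exponent:
  assumes "2 \<le> r"
  obtains h where "(\<lambda>x. f x - h x) \<in> P_gt1 n" "Lnorm n r h \<le> 4 * Qfun n r f"
proof -
  define M where "M = Max (insert 0 ((\<lambda>i. \<bar>fourier n f {i}\<bar>) ` {1..n}))"
  define B2 where "B2 = (\<Sum>i\<in>{1..n}. (fourier n f {i})\<^sup>2)"
  have "0 \<le> M"
    unfolding M_def by (intro Max_ge) auto
  obtain h\<^sub>0 where h\<^sub>0: "expect n h\<^sub>0 = 0" "\<And>j. j \<in> {1..n} \<Longrightarrow> fourier n h\<^sub>0 {j} = fourier n f {j}"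
    "\<And>x. x \<in> cube n \<Longrightarrow> \<bar>h\<^sub>0 x\<bar> \<le> 2 * sqrt B2 + 2 * M"
    using bounded_level_one_extension[of n "\<lambda>i. fourier n f {i}" M] abs_fourier_le_Max \<open>0 \<le> M\<close>
    unfolding M_def B2_def by blast
  define h where "h x = expect n f + h\<^sub>0 x" for x
  have "(\<lambda>x. f x - h x) \<in> P_gt1 n"
    using h\<^sub>0 by (intro diff_in_P_gt1I) (simp_all add: h_def expect_add fourier_add_const)
  moreover have "Lnorm n r h \<le> 4 * Qfun n r f"
  proof -
    have "1 < r"
      using assms by (cases r) auto
    then have "Lnorm n r h \<le> \<bar>expect n f\<bar> + 2 * sqrt B2 + 2 * M"
      using h\<^sub>0(3) by (intro Lnorm_le_const) (auto simp: h_def intro: abs_triangle_ineq order_trans)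
    moreover have "1/2 \<le> sqrt (rfactor r)"
      using rfactor_ge_half[OF assms] by (intro real_le_rsqrt) (simp add: power2_eq_square)
    then have "1 * sqrt B2 \<le> (2 * sqrt (rfactor r)) * sqrt B2"
      by (intro mult_right_mono) (auto simp: B2_def sum_nonneg)
    then have "sqrt B2 \<le> 2 * (sqrt (rfactor r) * sqrt B2)"
      by (simp add: mult.assoc)
    moreover have "Qfun n r f = \<bar>expect n f\<bar> + M + sqrt (rfactor r) * sqrt B2"
      by (simp add: Qfun_def M_def B2_def)
    ultimately show ?thesis
      using \<open>0 \<le> M\<close> abs_ge_zero[of "expect n f"] by linarith
  qed
  ultimately show ?thesis
    using that by blast
qed

lemma Lnorm_extension_small_exponent:
  assumes \<rho>: "1 < \<rho>" "\<rho> \<le> 2"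
  obtains h where "(\<lambda>x. f x - h x) \<in> P_gt1 n" "Lnorm n (ereal \<rho>) h \<le> 48 * Qfun n (ereal \<rho>) f"
proof -
  define M where "M = Max (insert 0 ((\<lambda>i. \<bar>fourier n f {i}\<bar>) ` {1..n}))"
  define B2 where "B2 = (\<Sum>i\<in>{1..n}. (fourier n f {i})\<^sup>2)"
  define \<theta> where "\<theta> = M + sqrt (\<rho> - 1) * sqrt B2"
  have "0 \<le> M" "0 \<le> B2" "0 \<le> sqrt (\<rho> - 1) * sqrt B2"
    using \<rho> by (auto simp: M_def B2_def sum_nonneg intro: Max_ge)
  have "0 \<le> \<theta>"
    using \<open>0 \<le> M\<close> \<open>0 \<le> sqrt (\<rho> - 1) * sqrt B2\<close> by (simp add: \<theta>_def)
  have b_le: "\<bar>fourier n f {i}\<bar> \<le> \<theta>" if "i \<in> {1..n}" for i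
    using abs_fourier_le_Max[OF that, of f] \<open>0 \<le> sqrt (\<rho> - 1) * sqrt B2\<close>
    by (simp add: \<theta>_def M_def)
  have "(\<rho> - 1) * B2 = (sqrt (\<rho> - 1) * sqrt B2)\<^sup>2"
    using \<rho> \<open>0 \<le> B2\<close> by (simp add: power_mult_distrib)
  also have "\<dots> \<le> \<theta>\<^sup>2"
    using \<open>0 \<le> M\<close> \<open>0 \<le> sqrt (\<rho> - 1) * sqrt B2\<close> by (intro power_mono) (auto simp: \<theta>_def)
  finally have b_sq: "(\<rho> - 1) * (\<Sum>i\<in>{1..n}. (fourier n f {i})\<^sup>2) \<le> \<theta>\<^sup>2"
    by (simp add: B2_def)
  obtain h where h: "expect n h = expect n f" "\<And>j. j \<in> {1..n} \<Longrightarrow> fourier n h {j} = fourier n f {j}"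
    "Lnorm n (ereal \<rho>) h \<le> 16 * (\<bar>expect n f\<bar> + 2 * \<theta>)"
    using riesz_level_one_extension[OF \<rho> \<open>0 \<le> \<theta>\<close> b_le b_sq, where a = "expect n f"] by metis
  have "sqrt (\<rho> - 1) \<le> 3/2 * sqrt (rfactor (ereal \<rho>))"
    using \<rho> by (rule sqrt_minus_one_le_sqrt_rfactor)
  then have "sqrt (\<rho> - 1) * sqrt B2 \<le> (3/2 * sqrt (rfactor (ereal \<rho>))) * sqrt B2"
    by (rule mult_right_mono) (simp add: \<open>0 \<le> B2\<close>)
  then have "sqrt (\<rho> - 1) * sqrt B2 \<le> 3/2 * (sqrt (rfactor (ereal \<rho>)) * sqrt B2)"
    by (simp only: mult.assoc)
  moreover have "Qfun n (ereal \<rho>) f = \<bar>expect n f\<bar> + M + sqrt (rfactor (ereal \<rho>)) * sqrt B2"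
    by (simp add: Qfun_def M_def B2_def)
  moreover have "Lnorm n (ereal \<rho>) h \<le> 16 * \<bar>expect n f\<bar> + 32 * M + 32 * (sqrt (\<rho> - 1) * sqrt B2)"
    using h(3) by (simp add: \<theta>_def algebra_simps)
  ultimately have "Lnorm n (ereal \<rho>) h \<le> 48 * Qfun n (ereal \<rho>) f"
    using \<open>0 \<le> M\<close> abs_ge_zero[of "expect n f"] by linarith
  with h(1,2) show ?thesis
    using that diff_in_P_gt1I by blast
qed

lemma Lnorm_extension:
  assumes "1 < r"
  obtains h where "(\<lambda>x. f x - h x) \<in> P_gt1 n" "Lnorm n r h \<le> 48 * Qfun n r f"
proof (cases "2 \<le> r")
  case True
  then obtain h where h: "(\<lambda>x. f x - h x) \<in> P_gt1 n" "Lnorm n r h \<le> 4 * Qfun n r f"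
    by (rule Lnorm_extension_large_exponent)
  then have "Lnorm n r h \<le> 48 * Qfun n r f"
    using Lnorm_nonneg[of n r h] by linarith
  with h(1) show ?thesis
    by (rule that)
next
  case False
  with assms obtain \<rho> where "r = ereal \<rho>" "1 < \<rho>" "\<rho> \<le> 2"
    by (cases r) auto
  then show ?thesis
    using Lnorm_extension_small_exponent that by metis
qed

lemma INF_Lnorm_le_Qfun:
  assumes "1 < r"
  shows "(INF g\<in>P_gt1 n. Lnorm n r (\<lambda>x. f x - g x)) \<le> 48 * Qfun n r f"
proof -
  obtain h where h: "(\<lambda>x. f x - h x) \<in> P_gt1 n" "Lnorm n r h \<le> 48 * Qfun n r f"
    using Lnorm_extension[OF assms] .
  have "(INF g\<in>P_gt1 n. Lnorm n r (\<lambda>x. f x - g x)) \<le> Lnorm n r (\<lambda>x. f x - (f x - h x))"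
    by (rule cINF_lower[OF _ h(1)]) (auto intro: bdd_belowI2[where m = 0] simp: Lnorm_nonneg)
  with h(2) show ?thesis
    by simp
qed

theorem theorem1p2:
  shows "\<exists>c C :: real. 0 < c \<and> c \<le> C \<and>
    (\<forall>r :: ereal. 1 < r \<longrightarrow> (\<forall>(n::nat) (f :: (nat \<Rightarrow> real) \<Rightarrow> real).
       c * Qfun n r f \<le> (INF g\<in>P_gt1 n. Lnorm n r (\<lambda>x. f x - g x)) \<and>
       (INF g\<in>P_gt1 n. Lnorm n r (\<lambda>x. f x - g x)) \<le> C * Qfun n r f))"
  using Qfun_le_INF_Lnorm INF_Lnorm_le_Qfun by (intro exI[of _ "1/8"] exI[of _ 48]) auto

end
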